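(* Let $q$ be a prime power, $n=q^4-1$, and let $x=(a_0,a_1,a_2,a_3)\in\{1,\ldots,n-1\}$ with $I_x=\{x\}$. Then $I_x$ is a symmetric coset if and only if $a_2+a_3=q-1$, and $I_x$ is an SR-asymmetric coset if and only if $a_2+a_3>q-1$.
   Context: Identify $\mathbb{Z}_n$ with $\{0,\ldots,n-1\}$, all arithmetic modulo $n$. The $q$-adic 4-tuple $(a_0,a_1,a_2,a_3)$ denotes $a_0+a_1q+a_2q^2+a_3q^3$ with $0\le a_i<q$. The cyclotomic coset of $x$ with respect to $q^2$ is $I_x=\{x,\,q^2x\bmod n\}$; its minimal representative is its least element. The (Hermitian) reciprocal coset of $I_x$ is $I_{n-qx}$ (with $n-qx$ reduced modulo $n$). $I_x$ is symmetric if $I_{n-qx}=I_x$ and asymmetric otherwise. If $I_x$ is asymmetric with reciprocal coset $I_y$, with $x,y$ the minimal representatives and $x<y$, then $I_x$ is the FR-asymmetric coset and $I_y$ the SR-asymmetric coset of the pair. *)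

theory Defs
  imports "HOL-Computational_Algebra.Primes"
begin

definition prime_power :: "nat \<Rightarrow> bool" where
  "prime_power q \<longleftrightarrow> (\<exists>p k. prime p \<and> k \<ge> 1 \<and> q = p ^ k)"

definition digit :: "nat \<Rightarrow> nat \<Rightarrow> nat \<Rightarrow> nat" where
  "digit q i x = (x div q ^ i) mod q"

definition cyc_coset :: "nat \<Rightarrow> nat \<Rightarrow> nat \<Rightarrow> nat set" where
  "cyc_coset q n x = {x mod n, (q^2 * x) mod n}"

text \<open>Representative n - qx (mod n) of the Hermitian reciprocal coset\<close>
definition recip_rep :: "nat \<Rightarrow> nat \<Rightarrow> nat \<Rightarrow> nat" where
  "recip_rep q n x = (n - (q * x) mod n) mod n"

definition symmetric_coset :: "nat \<Rightarrow> nat \<Rightarrow> nat \<Rightarrow> bool" where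
  "symmetric_coset q n x \<longleftrightarrow> cyc_coset q n (recip_rep q n x) = cyc_coset q n x"

definition SR_asymmetric_coset :: "nat \<Rightarrow> nat \<Rightarrow> nat \<Rightarrow> bool" where
  "SR_asymmetric_coset q n x \<longleftrightarrow> \<not> symmetric_coset q n x \<and>
     Min (cyc_coset q n (recip_rep q n x)) < Min (cyc_coset q n x)"

end

theory Submission
  imports Defs
begin

text \<open>Write \<open>t = q\<^sup>2 - 1\<close> and \<open>m = q\<^sup>2 + 1\<close>, so \<open>n = t m\<close>. As \<open>I\<^sub>x = {x}\<close> means \<open>(q\<^sup>2 - 1) x \<equiv> 0 (mod n)\<close>,
  the singleton cosets are exactly the multiples \<open>x = k m\<close> with \<open>0 < k < t\<close>, and such an
  \<open>x\<close> has digits \<open>(a\<^sub>0, a\<^sub>1, a\<^sub>0, a\<^sub>1)\<close> where \<open>k = a\<^sub>0 + a\<^sub>1 q\<close>. Modulo \<open>t\<close> we have \<open>q\<^sup>2 \<equiv> 1\<close>,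
  so \<open>q k \<equiv> k' = a\<^sub>1 + a\<^sub>0 q\<close>, and the reciprocal coset is the singleton \<open>{(t - k') m}\<close>.
  Comparing \<open>(t - k') m\<close> with \<open>k m\<close> amounts to comparing \<open>k + k' = (a\<^sub>0 + a\<^sub>1)(q + 1)\<close>
  with \<open>t = (q - 1)(q + 1)\<close>.\<close>

lemma prime_power_ge_2:
  assumes "prime_power q"
  shows "q \<ge> 2"
proof -
  obtain p k where p: "prime p" and "k \<ge> 1" and q: "q = p ^ k"
    using assms unfolding prime_power_def by blast
  have "p ^ 1 \<le> p ^ k"
    using \<open>k \<ge> 1\<close> prime_ge_1_nat[OF p] by (rule power_increasing)
  then show ?thesis
    using prime_ge_2_nat[OF p] q by simp
qed

lemma power4_minus_one_eq: "(q::nat) ^ 4 - 1 = (q\<^sup>2 - 1) * (q\<^sup>2 + 1)"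
proof -
  have "q ^ 4 = q\<^sup>2 * q\<^sup>2" by (simp flip: power_add)
  then show ?thesis by (simp add: algebra_simps)
qed

lemma cyc_coset_eq_singleton_iff:
  fixes q x :: nat
  assumes "q \<ge> 2" and "x < q ^ 4 - 1"
  shows "cyc_coset q (q ^ 4 - 1) x = {x} \<longleftrightarrow> (q\<^sup>2 + 1) dvd x"
proof -
  let ?n = "q ^ 4 - 1"
  have "q\<^sup>2 \<ge> 2"
    using assms(1) mult_le_mono[of 2 q 1 q] by (simp add: power2_eq_square)
  then have t_pos: "q\<^sup>2 - 1 > 0" by simp
  have "cyc_coset q ?n x = {x} \<longleftrightarrow> (q\<^sup>2 * x) mod ?n = x mod ?n"
    using assms(2) unfolding cyc_coset_def by auto
  also have "\<dots> \<longleftrightarrow> ?n dvd q\<^sup>2 * x - x"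
    by (rule mod_eq_dvd_iff_nat) (use \<open>q\<^sup>2 \<ge> 2\<close> in simp)
  also have "q\<^sup>2 * x - x = (q\<^sup>2 - 1) * x"
    by (simp add: diff_mult_distrib)
  also have "?n dvd (q\<^sup>2 - 1) * x \<longleftrightarrow> (q\<^sup>2 + 1) dvd x"
    unfolding power4_minus_one_eq using t_pos by (rule nat_mult_dvd_cancel1)
  finally show ?thesis .
qed

lemma digits_mult_base_sq_plus_one:
  fixes q k :: nat
  assumes "k < q\<^sup>2"
  shows "digit q 2 (k * (q\<^sup>2 + 1)) = k mod q" and "digit q 3 (k * (q\<^sup>2 + 1)) = k div q"
proof -
  have "q\<^sup>2 > 0" using assms by linarith
  then have high: "k * (q\<^sup>2 + 1) div q\<^sup>2 = k"
    using assms by (simp add: algebra_simps)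
  then show "digit q 2 (k * (q\<^sup>2 + 1)) = k mod q"
    unfolding digit_def by simp
  have "k * (q\<^sup>2 + 1) div q ^ 3 = k div q"
    using high by (simp add: numeral_3_eq_3 power2_eq_square div_mult2_eq)
  moreover have "k div q < q"
    using assms by (simp add: less_mult_imp_div_less power2_eq_square)
  ultimately show "digit q 3 (k * (q\<^sup>2 + 1)) = k div q"
    unfolding digit_def by simp
qed

lemma swap_base_digits_less:
  fixes q a0 a1 :: nat
  assumes "a0 < q" "a1 < q" "a0 + q * a1 < q\<^sup>2 - 1"
  shows "a1 + q * a0 < q\<^sup>2 - 1"
proof -
  have sq: "q\<^sup>2 - 1 = (q - 1) + q * (q - 1)"
    using assms(1) by (cases q) (auto simp: power2_eq_square)
  show ?thesis
  proof (cases "a0 = q - 1")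
    case True
    then have "q * a1 < q * (q - 1)" using assms(3) sq by simp
    then have "a1 < q - 1" by simp
    then show ?thesis using True sq by simp
  next
    case False
    then have "q * (a0 + 1) \<le> q * (q - 1)" using assms(1) by (intro mult_le_mono2) simp
    then show ?thesis using assms(2) sq by (simp add: algebra_simps)
  qed
qed

lemma mult_base_mod_base_sq_minus_one:
  fixes q k :: nat
  assumes "k < q\<^sup>2 - 1"
  shows "(q * k) mod (q\<^sup>2 - 1) = k div q + q * (k mod q)"
proof -
  have q_pos: "q > 0" using assms by (cases q) auto
  define a0 a1 where "a0 = k mod q" and "a1 = k div q"
  have k_eq: "k = a0 + q * a1" unfolding a0_def a1_def by simp
  have "a0 < q" "a1 < q"
    using assms q_pos unfolding a0_def a1_def
    by (auto simp: less_mult_imp_div_less power2_eq_square)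
  have "q * k = (a1 + q * a0) + a1 * (q\<^sup>2 - 1)"
  proof -
    have "a1 * q\<^sup>2 = a1 + a1 * (q\<^sup>2 - 1)"
      using q_pos by (cases q) (simp_all add: algebra_simps)
    then show ?thesis
      unfolding k_eq by (simp add: algebra_simps power2_eq_square)
  qed
  moreover have "a1 + q * a0 < q\<^sup>2 - 1"
    using swap_base_digits_less \<open>a0 < q\<close> \<open>a1 < q\<close> assms k_eq by blast
  ultimately show ?thesis
    unfolding a0_def a1_def by simp
qed
lemma recip_rep_mult_base_sq_plus_one:
  fixes q k :: nat
  assumes "0 < k" and "k < q\<^sup>2 - 1"
  shows "recip_rep q (q ^ 4 - 1) (k * (q\<^sup>2 + 1))
           = (q\<^sup>2 - 1 - (k div q + q * (k mod q))) * (q\<^sup>2 + 1)"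
proof -
  let ?t = "q\<^sup>2 - 1" and ?m = "q\<^sup>2 + 1" and ?k' = "k div q + q * (k mod q)"
  have "q > 0" using assms(2) by (cases q) auto
  have k'_pos: "?k' > 0"
  proof (rule ccontr)
    assume "\<not> ?k' > 0"
    then have "k div q = 0" "k mod q = 0" using \<open>q > 0\<close> by simp_all
    then show False using assms(1) div_mult_mod_eq[of k q] by simp
  qed
  have "(q * (k * ?m)) mod (q ^ 4 - 1) = ((q * k) * ?m) mod (?t * ?m)"
    unfolding power4_minus_one_eq by (simp only: mult.assoc)
  also have "\<dots> = ((q * k) mod ?t) * ?m"
    by (rule mod_mult_mult2)
  also have "\<dots> = ?k' * ?m"
    by (simp only: mult_base_mod_base_sq_minus_one[OF assms(2)])
  finally have qx: "(q * (k * ?m)) mod (q ^ 4 - 1) = ?k' * ?m" .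
  have "recip_rep q (q ^ 4 - 1) (k * ?m) = (?t * ?m - ?k' * ?m) mod (?t * ?m)"
    unfolding recip_rep_def qx by (simp only: power4_minus_one_eq)
  also have "\<dots> = ((?t - ?k') * ?m) mod (?t * ?m)"
    by (simp only: diff_mult_distrib)
  also have "\<dots> = (?t - ?k') * ?m"
  proof -
    have "?t - ?k' < ?t" using k'_pos assms(2) by linarith
    then show ?thesis by (intro mod_less mult_strict_right_mono) simp_all
  qed
  finally show ?thesis .
qed

lemma
  fixes q k :: nat
  defines "k' \<equiv> k div q + q * (k mod q)"
  assumes "q \<ge> 2" and "0 < k" and "k < q\<^sup>2 - 1"
  shows symmetric_coset_mult_base_sq_plus_one:
      "symmetric_coset q (q ^ 4 - 1) (k * (q\<^sup>2 + 1)) \<longleftrightarrow> k + k' = q\<^sup>2 - 1"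
    and SR_asymmetric_coset_mult_base_sq_plus_one:
      "SR_asymmetric_coset q (q ^ 4 - 1) (k * (q\<^sup>2 + 1)) \<longleftrightarrow> q\<^sup>2 - 1 < k + k'"
proof -
  let ?n = "q ^ 4 - 1" and ?t = "q\<^sup>2 - 1" and ?m = "q\<^sup>2 + 1"
  have "k' = (q * k) mod ?t"
    using assms(4) unfolding k'_def by (simp only: mult_base_mod_base_sq_minus_one)
  then have "k' < ?t"
    using assms(4) by simp
  have x_less: "k * ?m < ?n"
    unfolding power4_minus_one_eq mult_less_cancel2 using assms(4) by simp
  have "?n > 0"
    using x_less by simp
  then have "recip_rep q ?n (k * ?m) < ?n"
    unfolding recip_rep_def by simp
  then have y_less: "(?t - k') * ?m < ?n"
    by (simp only: recip_rep_mult_base_sq_plus_one assms(3,4) k'_def)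
  have x_coset: "cyc_coset q ?n (k * ?m) = {k * ?m}"
    unfolding cyc_coset_eq_singleton_iff[OF assms(2) x_less] by (rule dvd_triv_right)
  have y_coset: "cyc_coset q ?n (recip_rep q ?n (k * ?m)) = {(?t - k') * ?m}"
    using cyc_coset_eq_singleton_iff[OF assms(2) y_less]
    by (simp only: recip_rep_mult_base_sq_plus_one assms(3,4) k'_def dvd_triv_right)
  have "symmetric_coset q ?n (k * ?m) \<longleftrightarrow> (?t - k') * ?m = k * ?m"
    unfolding symmetric_coset_def x_coset y_coset by blast
  also have "\<dots> \<longleftrightarrow> k + k' = ?t"
    unfolding mult_cancel2 using \<open>k' < ?t\<close> by linarith
  finally show sym: "symmetric_coset q ?n (k * ?m) \<longleftrightarrow> k + k' = ?t" .
  have "(?t - k') * ?m < k * ?m \<longleftrightarrow> ?t < k + k'"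
    unfolding mult_less_cancel2 using \<open>k' < ?t\<close> by linarith
  then show "SR_asymmetric_coset q ?n (k * ?m) \<longleftrightarrow> ?t < k + k'"
    unfolding SR_asymmetric_coset_def sym x_coset y_coset Min_singleton by linarith
qed

theorem mainTheorem8:
  fixes q n x :: nat
  assumes "prime_power q"
    and "n = q ^ 4 - 1"
    and "1 \<le> x" and "x \<le> n - 1"
    and "cyc_coset q n x = {x}"
  shows "(symmetric_coset q n x \<longleftrightarrow> digit q 2 x + digit q 3 x = q - 1)
       \<and> (SR_asymmetric_coset q n x \<longleftrightarrow> digit q 2 x + digit q 3 x > q - 1)"
proof -
  have q: "q \<ge> 2" using assms(1) by (rule prime_power_ge_2)
  have "x < q ^ 4 - 1" using assms(2-4) by linarith
  then have "(q\<^sup>2 + 1) dvd x"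
    using assms(2,5) cyc_coset_eq_singleton_iff[OF q] by simp
  then obtain k where "x = (q\<^sup>2 + 1) * k" ..
  then have x: "x = k * (q\<^sup>2 + 1)" by (simp only: mult.commute)
  have "k < q\<^sup>2 - 1"
    using \<open>x < q ^ 4 - 1\<close> unfolding x power4_minus_one_eq mult_less_cancel2 by simp
  have "0 < k"
    using assms(3) unfolding x by (cases k) simp_all
  have "k < q\<^sup>2" using \<open>k < q\<^sup>2 - 1\<close> by simp
  define k' where "k' = k div q + q * (k mod q)"
  have "k + k' = (digit q 2 x + digit q 3 x) * (q + 1)"
    unfolding x digits_mult_base_sq_plus_one[OF \<open>k < q\<^sup>2\<close>] k'_def
    using div_mult_mod_eq[of k q] by (simp only: algebra_simps)
  moreover have "q\<^sup>2 - 1 = (q - 1) * (q + 1)"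
    by (simp add: power2_eq_square algebra_simps)
  ultimately show ?thesis
    using symmetric_coset_mult_base_sq_plus_one[OF q \<open>0 < k\<close> \<open>k < q\<^sup>2 - 1\<close>]
      SR_asymmetric_coset_mult_base_sq_plus_one[OF q \<open>0 < k\<close> \<open>k < q\<^sup>2 - 1\<close>]
    unfolding assms(2) x k'_def[symmetric] by (simp only: mult_cancel2 mult_less_cancel2) simp
qed

end
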